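(* Let $\mathcal H$ be a finite-dimensional Hilbert space, $H(t_i)=\sum_l E^i_l\Pi^i_l$, $H(t_f)=\sum_k E^f_k\Pi^f_k$ Hermitian with spectral projectors, $\beta>0$, $\gamma_{\beta,i}=e^{-\beta H(t_i)}/\mathcal Z_{\beta,i}$, $\gamma_{\beta,f}=e^{-\beta H(t_f)}/\mathcal Z_{\beta,f}$, $\Delta F=-\beta^{-1}\ln(\mathcal Z_{\beta,f}/\mathcal Z_{\beta,i})$. Let $\Phi[X]=\sum_\alpha A_\alpha XA_\alpha^\dagger$ be a CPTP map with a full-rank fixed point $\pi=\Phi[\pi]$, and let $\tilde\Phi[X]=\sum_\alpha\tilde A_\alpha X\tilde A_\alpha^\dagger$ with $\tilde A_\alpha=\pi^{1/2}A_\alpha^\dagger\pi^{-1/2}$. Let the forward and backward initial states be decomposed as $$\rho_i=(1-a)\gamma_{\beta,i}+a(1-c)\tau_d+ac\,\tau_c,\qquad \tilde\rho_i=(1-\tilde a)\gamma_{\beta,f}+\tilde a(1-\tilde c)\tilde\tau_d+\tilde a\tilde c\,\tilde\tau_c,$$ where $a,\tau$ (resp. $\tilde a,\tilde\tau$) are the weight of athermality and minimal athermal state of $\rho_i$ w.r.t. $\gamma_{\beta,i}$ (resp. of $\tilde\rho_i$ w.r.t. $\gamma_{\beta,f}$), and $\tau=(1-c)\tau_d+c\tau_c$ (resp. $\tilde\tau=(1-\tilde c)\tilde\tau_d+\tilde c\tilde\tau_c$) is the weight-of-coherence decomposition w.r.t. the eigenbasis of $H(t_i)$ (resp. $H(t_f)$).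 For an operator $\mathcal A$ set $p^i_l(\mathcal A)=\mathrm{Tr}(\mathcal A\Pi^i_l)$, $p^f_k(\mathcal A)=\mathrm{Tr}(\Phi[\mathcal A]\Pi^f_k)$, $\tilde p^i_k(\mathcal A)=\mathrm{Tr}(\mathcal A\Pi^f_k)$, $\tilde p^f_l(\mathcal A)=\mathrm{Tr}(\tilde\Phi[\mathcal A]\Pi^i_l)$, and $P_\Gamma(l,k)=p^i_l(\rho_i)p^f_k(\rho_i)$, $P_{\tilde\Gamma}(k,l)=\tilde p^i_k(\tilde\rho_i)\tilde p^f_l(\tilde\rho_i)$. Define $\Theta^{(i)}_l=\ln\!\big((1-a)+a(1-c)\tfrac{p^i_l(\tau_d)}{p^i_l(\gamma_{\beta,i})}\big)$, $\Sigma^{(i)}_l=\ln\!\big(1+\tfrac{ac\,p^i_l(\tau_c)}{(1-a)p^i_l(\gamma_{\beta,i})+a(1-c)p^i_l(\tau_d)}\big)$, and $\Theta^{(f)}_k,\Sigma^{(f)}_k$ by the same formulas with $p^i_l$ replaced by $p^f_k$; define $\tilde\Theta^{(i)}_k,\tilde\Sigma^{(i)}_k$ (resp. $\tilde\Theta^{(f)}_l,\tilde\Sigma^{(f)}_l$) by the same formulas with $(a,c,\tau_d,\tau_c,\gamma_{\beta,i})$ replaced by $(\tilde a,\tilde c,\tilde\tau_d,\tilde\tau_c,\gamma_{\beta,f})$ and $p^i_l$ replaced by $\tilde p^i_k$ (resp. $\tilde p^f_l$). Let $\Delta\sigma_{l,k}=\ln p^f_k(\gamma_{\beta,i})-\ln\tilde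 p^f_l(\gamma_{\beta,f})$, $\Delta\Theta_{l,k}=\Theta^{(i)}_l+\Theta^{(f)}_k-\tilde\Theta^{(i)}_k-\tilde\Theta^{(f)}_l$, $\Delta\Sigma_{l,k}=\Sigma^{(i)}_l+\Sigma^{(f)}_k-\tilde\Sigma^{(i)}_k-\tilde\Sigma^{(f)}_l$. Then, for every $(l,k)$ for which these quantities are well defined, $$\Delta s^{l,k}_{\rm tot}:=\ln\frac{P_\Gamma(l,k)}{P_{\tilde\Gamma}(k,l)}=\beta(\Delta E_{l,k}-\Delta F)+\Delta\sigma_{l,k}+\Delta\Theta_{l,k}+\Delta\Sigma_{l,k},\qquad \Delta E_{l,k}=E^f_k-E^i_l.$$
   Context: Weight of athermality: $A_w(\rho)=\min_{\tau\in\mathscr D(\mathcal H)}\{a\ge0:\rho=(1-a)\gamma+a\tau\}$ for a full-rank thermal reference state $\gamma$, with minimal athermal state $\tau$ the optimizer. Weight of coherence w.r.t. a basis: $C_w(\tau)=\min\{c\ge0:\tau=(1-c)\tau_d+c\tau_c,\ \tau_d\text{ diagonal in the basis},\ \tau_c\in\mathscr D(\mathcal H)\}$. Here $\Pi^i_l$ ($\Pi^f_k$) are the spectral projectors of $H(t_i)$ ($H(t_f)$), used in the eigenbasis-related statements as projectors onto eigenvectors. *)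

theory Defs
  imports "HOL-Analysis.Analysis"
begin

type_synonym ('n) op = "complex ^('n::finite) ^'n"

definition cinner :: "complex ^('n::finite) \<Rightarrow> complex ^'n \<Rightarrow> complex" where
  "cinner u v = (\<Sum>i\<in>UNIV. cnj (u $ i) * v $ i)"

definition adj :: "('n::finite) op \<Rightarrow> ('n::finite) op" where
  "adj A = (\<chi> i j. cnj (A $ j $ i))"

definition mtrace :: "('n::finite) op \<Rightarrow> complex" where
  "mtrace A = (\<Sum>i\<in>UNIV. A $ i $ i)"

definition psd :: "('n::finite) op \<Rightarrow> bool" where
  "psd A \<longleftrightarrow> (\<forall>x. cinner x (A *v x) \<in> \<real> \<and> 0 \<le> Re (cinner x (A *v x)))"

definition density :: "('n::finite) op \<Rightarrow> bool" where
  "density \<rho> \<longleftrightarrow> psd \<rho> \<and> mtrace \<rho> = 1"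

definition proj :: "complex ^('n::finite) \<Rightarrow> ('n::finite) op" where
  "proj v = (\<chi> i j. v $ i * cnj (v $ j))"

definition orthonormal_basis :: "('n \<Rightarrow> complex ^'n) \<Rightarrow> bool" where
  "orthonormal_basis e \<longleftrightarrow> (\<forall>l m. cinner (e l) (e m) = (if l = m then 1 else 0))"

definition hamiltonian :: "('n \<Rightarrow> real) \<Rightarrow> ('n \<Rightarrow> complex ^'n) \<Rightarrow> ('n::finite) op" where
  "hamiltonian E e = (\<Sum>l\<in>UNIV. E l *\<^sub>R proj (e l))"

definition exp_minus_beta_H :: "real \<Rightarrow> ('n \<Rightarrow> real) \<Rightarrow> ('n \<Rightarrow> complex ^'n) \<Rightarrow> ('n::finite) op" where
  "exp_minus_beta_H \<beta> E e = (\<Sum>l\<in>UNIV. exp (- \<beta> * E l) *\<^sub>R proj (e l))"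

definition partition_fn :: "real \<Rightarrow> ('n \<Rightarrow> real) \<Rightarrow> ('n \<Rightarrow> complex ^'n) \<Rightarrow> real" where
  "partition_fn \<beta> E e = Re (mtrace (exp_minus_beta_H \<beta> E e))"

definition gibbs :: "real \<Rightarrow> ('n \<Rightarrow> real) \<Rightarrow> ('n \<Rightarrow> complex ^'n) \<Rightarrow> ('n::finite) op" where
  "gibbs \<beta> E e = (1 / partition_fn \<beta> E e) *\<^sub>R exp_minus_beta_H \<beta> E e"

definition free_energy_diff :: "real \<Rightarrow> real \<Rightarrow> real \<Rightarrow> real" where
  "free_energy_diff \<beta> Zi Zf = - (1 / \<beta>) * ln (Zf / Zi)"

definition weight_athermality :: "('n::finite) op \<Rightarrow> ('n::finite) op \<Rightarrow> real \<Rightarrow> ('n::finite) op \<Rightarrow> bool" where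
  "weight_athermality \<gamma> \<rho> a \<tau> \<longleftrightarrow>
     0 \<le> a \<and> density \<tau> \<and> \<rho> = (1 - a) *\<^sub>R \<gamma> + a *\<^sub>R \<tau> \<and>
     (\<forall>a' \<tau>'. 0 \<le> a' \<and> density \<tau>' \<and> \<rho> = (1 - a') *\<^sub>R \<gamma> + a' *\<^sub>R \<tau>' \<longrightarrow> a \<le> a')"

definition diagonal_in :: "('n \<Rightarrow> complex ^'n) \<Rightarrow> ('n::finite) op \<Rightarrow> bool" where
  "diagonal_in e X \<longleftrightarrow> (\<forall>l m. l \<noteq> m \<longrightarrow> cinner (e l) (X *v e m) = 0)"

definition weight_coherence :: "('n \<Rightarrow> complex ^'n) \<Rightarrow> ('n::finite) op \<Rightarrow> real \<Rightarrow> ('n::finite) op \<Rightarrow> ('n::finite) op \<Rightarrow> bool" where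
  "weight_coherence e \<tau> c \<tau>d \<tau>c \<longleftrightarrow>
     0 \<le> c \<and> density \<tau>d \<and> diagonal_in e \<tau>d \<and> density \<tau>c \<and> \<tau> = (1 - c) *\<^sub>R \<tau>d + c *\<^sub>R \<tau>c \<and>
     (\<forall>c' \<tau>d' \<tau>c'. 0 \<le> c' \<and> density \<tau>d' \<and> diagonal_in e \<tau>d' \<and> density \<tau>c' \<and>
        \<tau> = (1 - c') *\<^sub>R \<tau>d' + c' *\<^sub>R \<tau>c' \<longrightarrow> c \<le> c')"

definition kraus_map :: "('k::finite \<Rightarrow> ('n::finite) op) \<Rightarrow> ('n::finite) op \<Rightarrow> ('n::finite) op" where
  "kraus_map A X = (\<Sum>\<alpha>\<in>UNIV. A \<alpha> ** X ** adj (A \<alpha>))"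

definition trace_preserving_kraus :: "('k::finite \<Rightarrow> ('n::finite) op) \<Rightarrow> bool" where
  "trace_preserving_kraus A \<longleftrightarrow> (\<Sum>\<alpha>\<in>UNIV. adj (A \<alpha>) ** A \<alpha>) = mat 1"

definition is_sqrt :: "('n::finite) op \<Rightarrow> ('n::finite) op \<Rightarrow> bool" where
  "is_sqrt S P \<longleftrightarrow> psd S \<and> S ** S = P"

text \<open>p(X) = Tr(X Pi) (real part; real for the Hermitian arguments used)\<close>
definition prob :: "('n::finite) op \<Rightarrow> ('n::finite) op \<Rightarrow> real" where
  "prob X P = Re (mtrace (X ** P))"

definition Theta_fn :: "real \<Rightarrow> real \<Rightarrow> real \<Rightarrow> real \<Rightarrow> real" where
  "Theta_fn a c pd pg = ln ((1 - a) + a * (1 - c) * (pd / pg))"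

definition Sigma_fn :: "real \<Rightarrow> real \<Rightarrow> real \<Rightarrow> real \<Rightarrow> real \<Rightarrow> real" where
  "Sigma_fn a c pd pc pg = ln (1 + a * c * pc / ((1 - a) * pg + a * (1 - c) * pd))"

definition TS_defined :: "real \<Rightarrow> real \<Rightarrow> real \<Rightarrow> real \<Rightarrow> real \<Rightarrow> bool" where
  "TS_defined a c pd pc pg \<longleftrightarrow> pg \<noteq> 0 \<and> (1 - a) + a * (1 - c) * (pd / pg) > 0 \<and>
     (1 - a) * pg + a * (1 - c) * pd \<noteq> 0 \<and> 1 + a * c * pc / ((1 - a) * pg + a * (1 - c) * pd) > 0"

end

theory Submission
  imports Defs
begin

text \<open>
  Every population appearing in the statement is the value of a real-linear functional
  (a trace against a projector, possibly after one of the maps \<open>\<Phi>\<close>, \<open>\<Phi>\<close>-tilde) at a state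
  of the form \<open>(1 - a) \<gamma> + a ((1 - c) \<tau>\<^sub>d + c \<tau>\<^sub>c)\<close>. For such a population \<open>p\<close> the
  correction terms telescope: \<open>\<Theta> + \<Sigma> = ln p(\<rho>) - ln p(\<gamma>)\<close>. The Gibbs populations in
  the eigenbasis of the corresponding Hamiltonian are \<open>e\<^sup>-\<^sup>\<beta>\<^sup>E / Z\<close>, which produces the
  energy and free-energy terms; the two remaining Gibbs populations make up \<open>\<Delta>\<sigma>\<close>.
  Only linearity of the two maps enters.
\<close>

lemma matrix_mult_scaleR_left:
  fixes X :: "'a::real_algebra_1 ^'n::finite ^'m" and Y :: "'a ^'p ^'n"
  shows "(r *\<^sub>R X) ** Y = r *\<^sub>R (X ** Y)"
  by (simp add: vec_eq_iff matrix_matrix_mult_def scaleR_sum_right)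

lemma matrix_mult_scaleR_right:
  fixes X :: "'a::real_algebra_1 ^'n::finite ^'m" and Y :: "'a ^'p ^'n"
  shows "X ** (r *\<^sub>R Y) = r *\<^sub>R (X ** Y)"
  by (simp add: vec_eq_iff matrix_matrix_mult_def scaleR_sum_right)

lemma matrix_add_rdistrib:
  fixes X Y :: "'a::semiring_1 ^'n::finite ^'m" and Z :: "'a ^'p ^'n"
  shows "(X + Y) ** Z = X ** Z + Y ** Z"
  by (simp add: vec_eq_iff matrix_matrix_mult_def sum.distrib distrib_right)

lemma linear_matrix_sandwich:
  "linear (\<lambda>X :: 'a::real_algebra_1 ^'n::finite ^'n. B ** X ** C)"
  by (intro linearI)
    (simp_all add: matrix_add_ldistrib matrix_add_rdistrib
      matrix_mult_scaleR_left matrix_mult_scaleR_right)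

lemma linear_kraus_map: "linear (kraus_map A)"
proof -
  have "linear (\<lambda>X. \<Sum>\<alpha>\<in>UNIV. A \<alpha> ** X ** adj (A \<alpha>))"
    by (intro linear_compose_sum) (simp_all add: linear_matrix_sandwich)
  then show ?thesis
    by (simp add: kraus_map_def[abs_def])
qed

lemma linear_mtrace: "linear mtrace"
  by (intro linearI) (simp_all add: mtrace_def sum.distrib scaleR_sum_right)

lemma linear_prob: "linear (\<lambda>X. prob X P)"
proof -
  have "linear (Re \<circ> mtrace \<circ> (\<lambda>X. mat 1 ** X ** P))"
    by (intro linear_compose linear_matrix_sandwich linear_mtrace bounded_linear.linear
        bounded_linear_Re)
  then show ?thesis
    by (simp add: prob_def o_def)
qed

lemma weight_athermality_coherence_decomposition:
  assumes "weight_athermality \<gamma> \<rho> a \<tau>" and "weight_coherence e \<tau> c \<tau>d \<tau>c"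
  shows "\<rho> = (1 - a) *\<^sub>R \<gamma> + a *\<^sub>R ((1 - c) *\<^sub>R \<tau>d + c *\<^sub>R \<tau>c)"
  using assms unfolding weight_athermality_def weight_coherence_def by simp

lemma Theta_plus_Sigma_eq:
  assumes "TS_defined a c pd pc pg" and "pg > 0"
  defines "pr \<equiv> (1 - a) * pg + a * ((1 - c) * pd + c * pc)"
  shows "pr > 0" and "Theta_fn a c pd pg + Sigma_fn a c pd pc pg = ln pr - ln pg"
proof -
  define q where "q = (1 - a) * pg + a * (1 - c) * pd"
  have Theta_arg: "(1 - a) + a * (1 - c) * (pd / pg) = q / pg"
    using \<open>pg > 0\<close> by (simp add: q_def field_simps)
  have "q > 0"
    using assms(1,2) Theta_arg by (simp add: TS_defined_def zero_less_divide_iff)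
  have Sigma_arg: "1 + a * c * pc / ((1 - a) * pg + a * (1 - c) * pd) = pr / q"
    using \<open>q > 0\<close> by (simp add: q_def pr_def field_simps)
  show "pr > 0"
    using assms(1) Sigma_arg \<open>q > 0\<close> by (simp add: TS_defined_def zero_less_divide_iff)
  then show "Theta_fn a c pd pg + Sigma_fn a c pd pc pg = ln pr - ln pg"
    using \<open>q > 0\<close> \<open>pg > 0\<close>
    unfolding Theta_fn_def Sigma_fn_def Theta_arg Sigma_arg by (simp add: ln_div)
qed

lemma ln_population_mixture:
  fixes p :: "'a::real_vector \<Rightarrow> real"
  assumes "linear p" and "\<rho> = (1 - a) *\<^sub>R \<gamma> + a *\<^sub>R ((1 - c) *\<^sub>R \<tau>d + c *\<^sub>R \<tau>c)"
    and "TS_defined a c (p \<tau>d) (p \<tau>c) (p \<gamma>)" and "p \<gamma> > 0"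
  shows "p \<rho> > 0"
    and "ln (p \<rho>) = ln (p \<gamma>) + Theta_fn a c (p \<tau>d) (p \<gamma>) + Sigma_fn a c (p \<tau>d) (p \<tau>c) (p \<gamma>)"
proof -
  have "p \<rho> = (1 - a) * p \<gamma> + a * ((1 - c) * p \<tau>d + c * p \<tau>c)"
    using assms(1,2) by (simp add: linear_add linear_scale)
  then show "p \<rho> > 0" and "ln (p \<rho>) = ln (p \<gamma>) + Theta_fn a c (p \<tau>d) (p \<gamma>) + Sigma_fn a c (p \<tau>d) (p \<tau>c) (p \<gamma>)"
    using Theta_plus_Sigma_eq[OF assms(3,4)] by simp_all
qed

lemma mtrace_proj_mult_proj: "mtrace (proj u ** proj v) = cinner v u * cinner u v"
proof -
  have "mtrace (proj u ** proj v) = (\<Sum>i\<in>UNIV. \<Sum>j\<in>UNIV. (cnj (v $ i) * u $ i) * (cnj (u $ j) * v $ j))"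
    unfolding mtrace_def proj_def matrix_matrix_mult_def
    by (simp add: sum_distrib_left mult_ac)
  also have "\<dots> = cinner v u * cinner u v"
    by (simp only: cinner_def sum_product)
  finally show ?thesis .
qed

lemma prob_proj_orthonormal:
  assumes "orthonormal_basis e"
  shows "prob (proj (e m)) (proj (e l)) = (if m = l then 1 else 0)"
  using assms by (simp add: prob_def orthonormal_basis_def mtrace_proj_mult_proj)

lemma mtrace_proj: "mtrace (proj v) = cinner v v"
  by (simp add: mtrace_def proj_def cinner_def mult.commute)

lemma partition_fn_eq:
  assumes "orthonormal_basis e"
  shows "partition_fn \<beta> E e = (\<Sum>m\<in>UNIV. exp (- \<beta> * E m))"
proof -
  have "mtrace (proj (e m)) = 1" for m
    using assms by (simp add: mtrace_proj orthonormal_basis_def)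
  then show ?thesis
    by (simp add: partition_fn_def exp_minus_beta_H_def linear_sum[OF linear_mtrace]
        linear_scale[OF linear_mtrace] Re_sum)
qed

lemma partition_fn_pos: "orthonormal_basis e \<Longrightarrow> partition_fn \<beta> E e > 0"
  by (simp add: partition_fn_eq sum_pos)

lemma prob_gibbs:
  assumes "orthonormal_basis e"
  shows "prob (gibbs \<beta> E e) (proj (e l)) = exp (- \<beta> * E l) / partition_fn \<beta> E e"
proof -
  have "prob (exp_minus_beta_H \<beta> E e) (proj (e l)) = exp (- \<beta> * E l)"
    by (simp add: exp_minus_beta_H_def linear_sum[OF linear_prob] linear_scale[OF linear_prob]
        prob_proj_orthonormal[OF assms] if_distrib[of "\<lambda>x. _ * x"] cong: if_cong)
  then show ?thesis
    by (simp add: gibbs_def linear_scale[OF linear_prob])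
qed

lemma prob_gibbs_pos: "orthonormal_basis e \<Longrightarrow> prob (gibbs \<beta> E e) (proj (e l)) > 0"
  by (simp add: prob_gibbs partition_fn_pos)

lemma ln_prob_gibbs:
  assumes "orthonormal_basis e"
  shows "ln (prob (gibbs \<beta> E e) (proj (e l))) = - \<beta> * E l - ln (partition_fn \<beta> E e)"
  using partition_fn_pos[OF assms, where \<beta> = \<beta> and E = E]
  by (simp add: prob_gibbs[OF assms] ln_div)

lemma beta_free_energy_diff:
  "\<beta> \<noteq> 0 \<Longrightarrow> Zi > 0 \<Longrightarrow> Zf > 0 \<Longrightarrow> \<beta> * free_energy_diff \<beta> Zi Zf = ln Zi - ln Zf"
  by (simp add: free_energy_diff_def ln_div)

theorem mainTheorem4:
  fixes Ei Ef :: "'n::finite \<Rightarrow> real" and ei ef :: "'n \<Rightarrow> complex ^'n"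
    and \<beta> :: real and A :: "'k::finite \<Rightarrow> 'n op" and \<pi> S :: "'n op"
    and \<rho>i \<rho>ti \<tau> \<tau>d \<tau>c \<tau>t \<tau>td \<tau>tc :: "'n op"
    and a c a_t c_t :: real and l k :: 'n
  assumes ei: "orthonormal_basis ei" and ef: "orthonormal_basis ef"
    and beta: "\<beta> > 0"
    and TP: "trace_preserving_kraus A"
    and pi_state: "density \<pi>" and pi_full: "invertible \<pi>" and pi_fix: "kraus_map A \<pi> = \<pi>"
    and S_sqrt: "is_sqrt S \<pi>"
    and rho: "density \<rho>i" and rhot: "density \<rho>ti"
    and wa: "weight_athermality (gibbs \<beta> Ei ei) \<rho>i a \<tau>"
    and wc: "weight_coherence ei \<tau> c \<tau>d \<tau>c"
    and wat: "weight_athermality (gibbs \<beta> Ef ef) \<rho>ti a_t \<tau>t"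
    and wct: "weight_coherence ef \<tau>t c_t \<tau>td \<tau>tc"
  defines "\<gamma>i \<equiv> gibbs \<beta> Ei ei" and "\<gamma>f \<equiv> gibbs \<beta> Ef ef"
    and "p_i \<equiv> (\<lambda>X. prob X (proj (ei l)))"
    and "pf \<equiv> (\<lambda>X. prob (kraus_map A X) (proj (ef k)))"
    and "pti \<equiv> (\<lambda>X. prob X (proj (ef k)))"
    and "ptf \<equiv> (\<lambda>X. prob (kraus_map (\<lambda>\<alpha>. S ** adj (A \<alpha>) ** matrix_inv S) X) (proj (ei l)))"
  assumes wd_i: "TS_defined a c (p_i \<tau>d) (p_i \<tau>c) (p_i \<gamma>i)"
    and wd_f: "TS_defined a c (pf \<tau>d) (pf \<tau>c) (pf \<gamma>i)"
    and wd_ti: "TS_defined a_t c_t (pti \<tau>td) (pti \<tau>tc) (pti \<gamma>f)"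
    and wd_tf: "TS_defined a_t c_t (ptf \<tau>td) (ptf \<tau>tc) (ptf \<gamma>f)"
    and wd_sig: "pf \<gamma>i > 0" "ptf \<gamma>f > 0"
    and wd_P: "pti \<rho>ti * ptf \<rho>ti \<noteq> 0" "(p_i \<rho>i * pf \<rho>i) / (pti \<rho>ti * ptf \<rho>ti) > 0"
  shows "ln ((p_i \<rho>i * pf \<rho>i) / (pti \<rho>ti * ptf \<rho>ti)) =
      \<beta> * ((Ef k - Ei l) - free_energy_diff \<beta> (partition_fn \<beta> Ei ei) (partition_fn \<beta> Ef ef))
      + (ln (pf \<gamma>i) - ln (ptf \<gamma>f))
      + (Theta_fn a c (p_i \<tau>d) (p_i \<gamma>i) + Theta_fn a c (pf \<tau>d) (pf \<gamma>i)
         - Theta_fn a_t c_t (pti \<tau>td) (pti \<gamma>f) - Theta_fn a_t c_t (ptf \<tau>td) (ptf \<gamma>f))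
      + (Sigma_fn a c (p_i \<tau>d) (p_i \<tau>c) (p_i \<gamma>i) + Sigma_fn a c (pf \<tau>d) (pf \<tau>c) (pf \<gamma>i)
         - Sigma_fn a_t c_t (pti \<tau>td) (pti \<tau>tc) (pti \<gamma>f) - Sigma_fn a_t c_t (ptf \<tau>td) (ptf \<tau>tc) (ptf \<gamma>f))"
proof -
  have lin: "linear p_i" "linear pf" "linear pti" "linear ptf"
    unfolding p_i_def pf_def pti_def ptf_def
    using linear_compose[OF linear_kraus_map linear_prob]
    by (simp_all add: linear_prob o_def)
  have \<rho>i_eq: "\<rho>i = (1 - a) *\<^sub>R \<gamma>i + a *\<^sub>R ((1 - c) *\<^sub>R \<tau>d + c *\<^sub>R \<tau>c)"
    using weight_athermality_coherence_decomposition[OF wa wc] by (simp add: \<gamma>i_def)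
  have \<rho>ti_eq: "\<rho>ti = (1 - a_t) *\<^sub>R \<gamma>f + a_t *\<^sub>R ((1 - c_t) *\<^sub>R \<tau>td + c_t *\<^sub>R \<tau>tc)"
    using weight_athermality_coherence_decomposition[OF wat wct] by (simp add: \<gamma>f_def)
  have ln_\<gamma>i: "ln (p_i \<gamma>i) = - \<beta> * Ei l - ln (partition_fn \<beta> Ei ei)"
    and ln_\<gamma>f: "ln (pti \<gamma>f) = - \<beta> * Ef k - ln (partition_fn \<beta> Ef ef)"
    by (simp_all add: p_i_def \<gamma>i_def pti_def \<gamma>f_def ln_prob_gibbs ei ef)
  have "p_i \<gamma>i > 0" "pti \<gamma>f > 0"
    by (simp_all add: p_i_def \<gamma>i_def pti_def \<gamma>f_def prob_gibbs_pos ei ef)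
  note P_i = ln_population_mixture[OF lin(1) \<rho>i_eq wd_i \<open>p_i \<gamma>i > 0\<close>]
    and P_f = ln_population_mixture[OF lin(2) \<rho>i_eq wd_f wd_sig(1)]
    and P_ti = ln_population_mixture[OF lin(3) \<rho>ti_eq wd_ti \<open>pti \<gamma>f > 0\<close>]
    and P_tf = ln_population_mixture[OF lin(4) \<rho>ti_eq wd_tf wd_sig(2)]
  have "ln ((p_i \<rho>i * pf \<rho>i) / (pti \<rho>ti * ptf \<rho>ti))
      = ln (p_i \<rho>i) + ln (pf \<rho>i) - ln (pti \<rho>ti) - ln (ptf \<rho>ti)"
    using P_i(1) P_f(1) P_ti(1) P_tf(1) by (simp add: ln_div ln_mult)
  moreover have "\<beta> * free_energy_diff \<beta> (partition_fn \<beta> Ei ei) (partition_fn \<beta> Ef ef)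
      = ln (partition_fn \<beta> Ei ei) - ln (partition_fn \<beta> Ef ef)"
    using beta by (simp add: beta_free_energy_diff partition_fn_pos ei ef)
  ultimately show ?thesis
    using P_i(2) P_f(2) P_ti(2) P_tf(2) ln_\<gamma>i ln_\<gamma>f by (simp add: right_diff_distrib)
qed

end
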